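(* Fix $n\ge 1$, the shape $\lambda=n^2=(n,n)$, and a density $\rho$ with positive entries $\rho_{1,j}=a_j$, $\rho_{2,j}=b_j$ for $1\le j\le n$; let $a=\sum_j a_j$, $b=\sum_j b_j$. Let $P_{\max}=E^{a_1}N^{b_1}E^{a_2}N^{b_2}\cdots E^{a_n}N^{b_n}\in\mathcal{P}$ and $I=\{P\in\mathcal{P}: P\le P_{\max}\}$. Then $\psi_\rho$ is injective with image exactly $I$; in particular $\psi_\rho$ is a bijection between $\mathrm{SVT}(\lambda,\rho)$ and $I$.
   Context: A density on a shape $\lambda$ is an assignment of a nonnegative integer $\rho_{i,j}$ to every cell $(i,j)$ (row $i$, column $j$); let $N=\sum\rho_{i,j}$. A standard set-valued Young tableau of shape $\lambda$ and density $\rho$ assigns to each cell $(i,j)$ a set $S_{i,j}$ with $|S_{i,j}|=\rho_{i,j}$, the sets partitioning $[N]$, such that every element of $S_{i,j}$ is smaller than every element of $S_{i,j+1}$ and of $S_{i+1,j}$ whenever those cells exist. $\mathrm{SVT}(\lambda,\rho)$ is the set of these tableaux. $\mathcal{P}$ is the set of lattice paths from $(0,0)$ to $(a,b)$ using steps $E=(1,0)$ and $N=(0,1)$, written as words in $E,N$. The map $\psi_\rho:\mathrm{SVT}(\lambda,\rho)\to\mathcal{P}$ sends $T$ to the word whose $m$-th letter ($1\le m\le a+b$) is $E$ if $m$ lies in the first row of $T$ and $N$ if $m$ lies in the second row. For $P_1,P_2\in\mathcal{P}$, $P_1\ge P_2$ (equivalently $P_2\le P_1$) means $P_1$ lies weakly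 above $P_2$ over $0\le x\le a$. *)

theory Defs
  imports Main
begin

datatype step = E | N

text \<open>A shape is given by its list of row lengths; cells are (row, column), 1-based.\<close>
definition cells :: "nat list \<Rightarrow> (nat \<times> nat) set" where
  "cells lam = {(i, j). 1 \<le> i \<and> i \<le> length lam \<and> 1 \<le> j \<and> j \<le> lam ! (i - 1)}"

definition density_total :: "nat list \<Rightarrow> (nat \<times> nat \<Rightarrow> nat) \<Rightarrow> nat" where
  "density_total lam rho = (\<Sum>c\<in>cells lam. rho c)"

definition SVT :: "nat list \<Rightarrow> (nat \<times> nat \<Rightarrow> nat) \<Rightarrow> (nat \<times> nat \<Rightarrow> nat set) set" where
  "SVT lam rho = {T.
     (\<forall>c. c \<notin> cells lam \<longrightarrow> T c = {}) \<and>
     (\<forall>c\<in>cells lam. finite (T c) \<and> card (T c) = rho c) \<and>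
     (\<forall>c\<in>cells lam. \<forall>d\<in>cells lam. c \<noteq> d \<longrightarrow> T c \<inter> T d = {}) \<and>
     (\<Union>c\<in>cells lam. T c) = {1..density_total lam rho} \<and>
     (\<forall>i j. (i, j) \<in> cells lam \<longrightarrow>
        ((i, j + 1) \<in> cells lam \<longrightarrow> (\<forall>x\<in>T (i, j). \<forall>y\<in>T (i, j + 1). x < y)) \<and>
        ((i + 1, j) \<in> cells lam \<longrightarrow> (\<forall>x\<in>T (i, j). \<forall>y\<in>T (i + 1, j). x < y)))}"

definition paths :: "nat \<Rightarrow> nat \<Rightarrow> step list set" where
  "paths a b = {w. length w = a + b \<and> count_list w E = a \<and> count_list w N = b}"

definition point :: "step list \<Rightarrow> nat \<Rightarrow> nat \<times> nat" where
  "point w k = (count_list (take k w) E, count_list (take k w) N)"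

definition path_points :: "step list \<Rightarrow> (nat \<times> nat) set" where
  "path_points w = {point w k | k. k \<le> length w}"

text \<open>P1 lies weakly above P2: above every point of P2 there is a point of P1
  in the same column (for monotone lattice paths this is weakly-above over [0,a]).\<close>
definition path_ge :: "step list \<Rightarrow> step list \<Rightarrow> bool" where
  "path_ge P1 P2 \<longleftrightarrow> (\<forall>(x, y)\<in>path_points P2. \<exists>y'. y \<le> y' \<and> (x, y') \<in> path_points P1)"

definition psi :: "nat \<Rightarrow> (nat \<times> nat \<Rightarrow> nat set) \<Rightarrow> step list" where
  "psi L T = map (\<lambda>m. if (\<exists>j. m \<in> T (1, j)) then E else N) [1..<L + 1]"

definition two_row_density :: "(nat \<Rightarrow> nat) \<Rightarrow> (nat \<Rightarrow> nat) \<Rightarrow> nat \<times> nat \<Rightarrow> nat" where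
  "two_row_density av bv = (\<lambda>(i, j). if i = 1 then av j else if i = 2 then bv j else 0)"

definition P_max :: "nat \<Rightarrow> (nat \<Rightarrow> nat) \<Rightarrow> (nat \<Rightarrow> nat) \<Rightarrow> step list" where
  "P_max n av bv = concat (map (\<lambda>j. replicate (av j) E @ replicate (bv j) N) [1..<n + 1])"

end

theory Submission
  imports Defs
begin

text \<open>In a tableau of shape (n, n) the entries of row i are the positions of the letter of
  row i in its word. Because rows increase and no cell is empty, cell (i, j) must hold exactly
  those occurrences whose rank among all occurrences of that letter lies in
  (c_1 + ... + c_{j-1}, c_1 + ... + c_j], where c is the density of row i; so a tableau is
  determined by its word. Conversely, distributing the letters of any path in this way gives
  increasing rows with the prescribed cell sizes, and the columns increase iff for every j the
  (b_1 + ... + b_{j-1} + 1)-th north step comes after the (a_1 + ... + a_j)-th east step, which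
  says precisely that the path never rises above P_max.\<close>

section \<open>Ranks and positions of letters\<close>

definition rank :: "'a list \<Rightarrow> 'a \<Rightarrow> nat \<Rightarrow> nat" where
  "rank w s m = count_list (take m w) s"

text \<open>Positions are 1-based, like the entries of a tableau read off by psi.\<close>

definition positions :: "'a list \<Rightarrow> 'a \<Rightarrow> nat set" where
  "positions w s = {m. 1 \<le> m \<and> m \<le> length w \<and> w ! (m - 1) = s}"

lemma finite_positions [simp]: "finite (positions w s)"
  by (rule finite_subset[of _ "{..length w}"]) (auto simp: positions_def)

lemma count_list_take_le: "count_list (take k xs) x \<le> count_list xs x"
  by (metis append_take_drop_id count_list_append le_add1)

lemma rank_mono: "m \<le> m' \<Longrightarrow> rank w s m \<le> rank w s m'"
  unfolding rank_def by (metis count_list_take_le min.absorb1 take_take)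

lemma rank_le_count_list: "rank w s m \<le> count_list w s"
  unfolding rank_def by (rule count_list_take_le)

lemma rank_length [simp]: "rank w s (length w) = count_list w s"
  by (simp add: rank_def)

lemma rank_Suc: "rank w s (Suc k) = rank w s k + (if k < length w \<and> w ! k = s then 1 else 0)"
  by (cases "k < length w") (simp_all add: rank_def take_Suc_conv_app_nth)

lemma rank_position: "m \<in> positions w s \<Longrightarrow> rank w s m = Suc (rank w s (m - 1))"
  using rank_Suc[of w s "m - 1"] by (auto simp: positions_def)

lemma rank_less_position: "m \<in> positions w s \<Longrightarrow> m' < m \<Longrightarrow> rank w s m' < rank w s m"
  using rank_mono[of m' "m - 1" w s] rank_position[of m w s] by (simp add: less_Suc_eq_le)

lemma rank_attained:
  "1 \<le> r \<Longrightarrow> r \<le> rank w s k \<Longrightarrow> \<exists>p\<in>positions w s. p \<le> k \<and> rank w s p = r"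
proof (induction k)
  case (Suc k)
  show ?case
  proof (cases "r \<le> rank w s k")
    case True
    then show ?thesis using Suc by (meson le_Suc_eq)
  next
    case False
    then have "k < length w \<and> w ! k = s" "r = rank w s (Suc k)"
      using Suc.prems rank_Suc[of w s k] by (auto split: if_splits)
    then show ?thesis by (intro bexI[of _ "Suc k"]) (auto simp: positions_def)
  qed
qed (simp add: rank_def)

lemma rank_eq_card: "k \<le> length w \<Longrightarrow> rank w s k = card {p \<in> positions w s. p \<le> k}"
proof (induction k)
  case (Suc k)
  have "{p \<in> positions w s. p \<le> Suc k} =
      (if w ! k = s then insert (Suc k) else id) {p \<in> positions w s. p \<le> k}"
    using Suc.prems by (auto simp: positions_def le_Suc_eq)
  then show ?case using Suc rank_Suc[of w s k] by simp
qed (simp add: rank_def positions_def)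

lemma count_list_eq_card_positions: "count_list w s = card (positions w s)"
proof -
  have "{p \<in> positions w s. p \<le> length w} = positions w s"
    by (auto simp: positions_def)
  then show ?thesis using rank_eq_card[of "length w" w s] by simp
qed

definition partial_sum :: "(nat \<Rightarrow> nat) \<Rightarrow> nat \<Rightarrow> nat" where
  "partial_sum c j = (\<Sum>i=1..j. c i)"

lemma partial_sum_0 [simp]: "partial_sum c 0 = 0"
  by (simp add: partial_sum_def)

lemma partial_sum_Suc [simp]: "partial_sum c (Suc j) = partial_sum c j + c (Suc j)"
  by (simp add: partial_sum_def)

lemma partial_sum_pred: "1 \<le> j \<Longrightarrow> partial_sum c j = partial_sum c (j - 1) + c j"
  by (cases j) auto

lemma partial_sum_mono: "i \<le> j \<Longrightarrow> partial_sum c i \<le> partial_sum c j"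
  by (induction j) (auto simp: le_Suc_eq)

lemma partial_sum_interval:
  "0 < r \<Longrightarrow> r \<le> partial_sum c n \<Longrightarrow>
    \<exists>j\<in>{1..n}. partial_sum c (j - 1) < r \<and> r \<le> partial_sum c j"
proof (induction n)
  case (Suc n)
  then show ?case
    by (cases "r \<le> partial_sum c n") (force, auto intro!: bexI[of _ "Suc n"])
qed simp

lemma partial_sum_floor:
  "x \<le> partial_sum c n \<Longrightarrow>
    \<exists>j\<le>n. partial_sum c j \<le> x \<and> (j < n \<longrightarrow> x < partial_sum c (Suc j))"
proof (induction n)
  case (Suc n)
  show ?case
  proof (cases "partial_sum c (Suc n) \<le> x")
    case False
    show ?thesis
    proof (cases "x \<le> partial_sum c n")
      case True
      then obtain j where "j \<le> n" "partial_sum c j \<le> x" "j < n \<longrightarrow> x < partial_sum c (Suc j)"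
        using Suc.IH by blast
      then show ?thesis using False by (intro exI[of _ j]) (auto simp: less_Suc_eq)
    qed (use False in \<open>auto intro!: exI[of _ n]\<close>)
  qed auto
qed simp

section \<open>Blocks of occurrences\<close>

definition block :: "'a list \<Rightarrow> 'a \<Rightarrow> (nat \<Rightarrow> nat) \<Rightarrow> nat \<Rightarrow> nat set" where
  "block w s c j =
     {m \<in> positions w s. partial_sum c (j - 1) < rank w s m \<and> rank w s m \<le> partial_sum c j}"

lemma block_subset_positions: "block w s c j \<subseteq> positions w s"
  by (auto simp: block_def)

lemma card_block:
  assumes "1 \<le> j" "partial_sum c j \<le> count_list w s"
  shows "card (block w s c j) = c j"
proof -
  have "inj_on (rank w s) (block w s c j)"
    by (rule inj_onI) (metis block_subset_positions linorder_neq_iff rank_less_position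
        subsetD order_less_irrefl)
  moreover have "rank w s ` block w s c j = {partial_sum c (j - 1)<..partial_sum c j}"
  proof
    show "{partial_sum c (j - 1)<..partial_sum c j} \<subseteq> rank w s ` block w s c j"
    proof
      fix r assume r: "r \<in> {partial_sum c (j - 1)<..partial_sum c j}"
      then obtain p where "p \<in> positions w s" "rank w s p = r"
        using rank_attained[of r w s "length w"] assms(2) by auto
      then show "r \<in> rank w s ` block w s c j" using r by (auto simp: block_def)
    qed
  qed (auto simp: block_def)
  ultimately show ?thesis using card_image partial_sum_pred[OF assms(1), of c] by fastforce
qed

lemma block_less: "i < j \<Longrightarrow> x \<in> block w s c i \<Longrightarrow> y \<in> block w s c j \<Longrightarrow> x < y"
  using partial_sum_mono[of i "j - 1" c] rank_mono[of y x w s]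
  by (force simp: block_def)

lemma block_disjoint: "i \<noteq> j \<Longrightarrow> block w s c i \<inter> block w s c j = {}"
  by (auto dest: block_less simp: neq_iff)

lemma positions_eq_UN_block:
  assumes "count_list w s = partial_sum c n"
  shows "positions w s = (\<Union>j\<in>{1..n}. block w s c j)"
proof
  show "positions w s \<subseteq> (\<Union>j\<in>{1..n}. block w s c j)"
  proof
    fix m assume m: "m \<in> positions w s"
    have "0 < rank w s m" "rank w s m \<le> partial_sum c n"
      using rank_position[OF m] rank_le_count_list[of w s m] assms by simp_all
    then show "m \<in> (\<Union>j\<in>{1..n}. block w s c j)"
      using partial_sum_interval m by (fastforce simp: block_def)
  qed
qed (auto simp: block_def)

locale increasing_partition =
  fixes n :: nat and S :: "nat \<Rightarrow> nat set" and c :: "nat \<Rightarrow> nat"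
  assumes finite_part: "j \<in> {1..n} \<Longrightarrow> finite (S j)"
    and card_part: "j \<in> {1..n} \<Longrightarrow> card (S j) = c j"
    and part_pos: "j \<in> {1..n} \<Longrightarrow> 0 < c j"
    and part_increasing: "1 \<le> j \<Longrightarrow> j < n \<Longrightarrow> x \<in> S j \<Longrightarrow> y \<in> S (Suc j) \<Longrightarrow> x < y"
begin

lemma part_less: "1 \<le> i \<Longrightarrow> i < j \<Longrightarrow> j \<le> n \<Longrightarrow> x \<in> S i \<Longrightarrow> y \<in> S j \<Longrightarrow> x < y"
proof (induction j arbitrary: y)
  case (Suc j)
  show ?case
  proof (cases "i = j")
    case False
    then have "i < j" using Suc.prems by simp
    moreover obtain z where "z \<in> S j"
      using card_part[of j] part_pos[of j] Suc.prems \<open>i < j\<close> by fastforce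
    ultimately show ?thesis
      using Suc part_increasing[of j z y] by fastforce
  qed (use Suc.prems part_increasing in auto)
qed simp

lemma part_disjoint:
  assumes "i \<in> {1..n}" "j \<in> {1..n}" "i \<noteq> j"
  shows "S i \<inter> S j = {}"
proof -
  have "x \<notin> S i \<inter> S j" for x
    using assms part_less[of i j x x] part_less[of j i x x] by (cases "i < j") auto
  then show ?thesis by blast
qed

lemma card_UN_part: "j \<le> n \<Longrightarrow> card (\<Union>i\<in>{1..j}. S i) = partial_sum c j"
  by (subst card_UN_disjoint) (auto simp: partial_sum_def finite_part card_part part_disjoint)

lemma positions_le_in_part:
  assumes parts: "positions w s = (\<Union>j\<in>{1..n}. S j)" and j: "j \<in> {1..n}" and m: "m \<in> S j"
  shows "{p \<in> positions w s. p \<le> m} = (\<Union>i\<in>{1..j - 1}. S i) \<union> {p \<in> S j. p \<le> m}"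
proof (intro equalityI subsetI)
  fix p assume "p \<in> {p \<in> positions w s. p \<le> m}"
  then obtain i where i: "i \<in> {1..n}" "p \<in> S i" "p \<le> m" using parts by auto
  moreover have "\<not> j < i" using part_less[of j i m p] i j m by auto
  ultimately show "p \<in> (\<Union>i\<in>{1..j - 1}. S i) \<union> {p \<in> S j. p \<le> m}"
    by (cases "i = j") auto
next
  fix p assume p: "p \<in> (\<Union>i\<in>{1..j - 1}. S i) \<union> {p \<in> S j. p \<le> m}"
  then have "p \<le> m" using part_less[of _ j p m] j m by fastforce
  moreover have "{1..j - 1} \<subseteq> {1..n}" using j by auto
  ultimately show "p \<in> {p \<in> positions w s. p \<le> m}"
    using p j unfolding parts by blast
qed

lemma rank_part:
  assumes parts: "positions w s = (\<Union>j\<in>{1..n}. S j)" and j: "j \<in> {1..n}" and m: "m \<in> S j"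
  shows "partial_sum c (j - 1) < rank w s m \<and> rank w s m \<le> partial_sum c j"
proof -
  define before where "before = (\<Union>i\<in>{1..j - 1}. S i)"
  define below where "below = {p \<in> S j. p \<le> m}"
  have split: "{p \<in> positions w s. p \<le> m} = before \<union> below"
    unfolding before_def below_def by (rule positions_le_in_part[OF parts j m])
  have "before \<inter> below = {}"
    using part_disjoint j by (fastforce simp: before_def below_def)
  moreover have "finite before" "finite below"
    using finite_part j by (auto simp: before_def below_def)
  moreover have "m \<le> length w" using parts j m by (auto simp: positions_def)
  ultimately have "rank w s m = card before + card below"
    using rank_eq_card[of m w s] split by (simp add: card_Un_disjoint)
  moreover have "card before = partial_sum c (j - 1)"
    using card_UN_part[of "j - 1"] j unfolding before_def by fastforce
  moreover have "0 < card below" "card below \<le> c j"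
    using m finite_part[OF j] card_part[OF j] card_mono[of "S j" below]
    by (auto simp: below_def card_gt_0_iff)
  ultimately show ?thesis using partial_sum_pred[of j c] j by simp
qed

lemma part_eq_block:
  assumes parts: "positions w s = (\<Union>j\<in>{1..n}. S j)" and j: "j \<in> {1..n}"
  shows "S j = block w s c j"
proof
  show "S j \<subseteq> block w s c j"
    using rank_part[OF parts j] parts j by (auto simp: block_def)
  show "block w s c j \<subseteq> S j"
  proof
    fix m assume m: "m \<in> block w s c j"
    then have "m \<in> positions w s" by (simp add: block_def)
    then obtain i where i: "i \<in> {1..n}" "m \<in> S i" using parts by blast
    then have "m \<in> block w s c i"
      using rank_part[OF parts i] parts by (auto simp: block_def)
    then show "m \<in> S j" using i m block_disjoint[of i j w s c] by (cases "i = j") auto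
  qed
qed

end

section \<open>Two-row tableaux and their words\<close>

lemma cells_two_rows: "cells [n, n] = {1, 2} \<times> {1..n}"
  unfolding cells_def by (auto simp: nth_Cons' le_Suc_eq)

definition row_density :: "(nat \<times> nat \<Rightarrow> nat) \<Rightarrow> nat \<Rightarrow> nat \<Rightarrow> nat" where
  "row_density rho i j = rho (i, j)"

definition row_letter :: "nat \<Rightarrow> step" where
  "row_letter i = (if i = 1 then E else N)"

lemma density_total_two_rows:
  "density_total [n, n] rho = partial_sum (row_density rho 1) n + partial_sum (row_density rho 2) n"
proof -
  have "density_total [n, n] rho = (\<Sum>i\<in>{1, 2::nat}. \<Sum>j\<in>{1..n}. rho (i, j))"
    unfolding density_total_def cells_two_rows by (simp add: sum.cartesian_product)
  then show ?thesis by (simp add: partial_sum_def row_density_def)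
qed

lemma row_density_two_row_density:
  "row_density (two_row_density av bv) 1 = av" "row_density (two_row_density av bv) 2 = bv"
  by (simp_all add: fun_eq_iff row_density_def two_row_density_def)

lemma count_list_row_letter:
  assumes "w \<in> paths (partial_sum (row_density rho 1) n) (partial_sum (row_density rho 2) n)"
    and "i \<in> {1, 2}"
  shows "count_list w (row_letter i) = partial_sum (row_density rho i) n"
  using assms by (auto simp: paths_def row_letter_def)

lemma positions_E_Un_N: "positions w E \<union> positions w N = {1..length w}"
  by (auto simp: positions_def) (metis step.exhaust)

lemma positions_E_Int_N: "positions w E \<inter> positions w N = {}"
  by (auto simp: positions_def)

lemma step_list_eqI:
  assumes "length u = length v" "positions u E = positions v E"
  shows "u = v"
proof (rule nth_equalityI)
  fix i assume "i < length u"
  moreover have "Suc i \<in> positions u E \<longleftrightarrow> Suc i \<in> positions v E"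
    using assms(2) by simp
  ultimately have "u ! i = E \<longleftrightarrow> v ! i = E"
    using assms(1) by (simp add: positions_def)
  then show "u ! i = v ! i" by (cases "u ! i"; cases "v ! i") auto
qed (fact assms(1))

lemma length_psi [simp]: "length (psi L T) = L"
  by (simp add: psi_def)

lemma nth_psi: "m < L \<Longrightarrow> psi L T ! m = (if \<exists>j. Suc m \<in> T (1, j) then E else N)"
  by (simp add: psi_def del: upt_Suc)

lemma positions_psi_E: "positions (psi L T) E = {m \<in> {1..L}. \<exists>j. m \<in> T (1, j)}"
  by (auto simp: positions_def nth_psi split: if_splits)

definition word_tableau ::
    "nat \<Rightarrow> (nat \<times> nat \<Rightarrow> nat) \<Rightarrow> step list \<Rightarrow> nat \<times> nat \<Rightarrow> nat set" where
  "word_tableau n rho w = (\<lambda>(i, j).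
     if (i, j) \<in> cells [n, n] then block w (row_letter i) (row_density rho i) j else {})"

lemma positions_eq_UN_word_tableau:
  assumes "w \<in> paths (partial_sum (row_density rho 1) n) (partial_sum (row_density rho 2) n)"
    and "i \<in> {1, 2}"
  shows "positions w (row_letter i) = (\<Union>j\<in>{1..n}. word_tableau n rho w (i, j))"
  using positions_eq_UN_block[OF count_list_row_letter[OF assms]] assms(2)
  by (simp add: word_tableau_def cells_two_rows)

lemma psi_word_tableau:
  assumes "w \<in> paths (partial_sum (row_density rho 1) n) (partial_sum (row_density rho 2) n)"
  shows "psi (length w) (word_tableau n rho w) = w"
proof (rule step_list_eqI)
  have "(\<exists>j. m \<in> word_tableau n rho w (1, j)) \<longleftrightarrow> m \<in> positions w E" for m
    using positions_eq_UN_word_tableau[OF assms, of 1]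
    by (auto simp: word_tableau_def row_letter_def cells_two_rows split: if_splits)
  then show "positions (psi (length w) (word_tableau n rho w)) E = positions w E"
    unfolding positions_psi_E by (auto simp: positions_def)
qed simp

lemma word_tableau_cell:
  "(i, j) \<in> cells [n, n] \<Longrightarrow> word_tableau n rho w (i, j) = block w (row_letter i) (row_density rho i) j"
  by (simp add: word_tableau_def)

lemma card_word_tableau:
  assumes w: "w \<in> paths (partial_sum (row_density rho 1) n) (partial_sum (row_density rho 2) n)"
    and c: "c \<in> cells [n, n]"
  shows "finite (word_tableau n rho w c) \<and> card (word_tableau n rho w c) = rho c"
proof -
  obtain i j where ij: "c = (i, j)" "i \<in> {1, 2}" "j \<in> {1..n}"
    using c by (auto simp: cells_two_rows)
  then have "partial_sum (row_density rho i) j \<le> count_list w (row_letter i)"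
    using count_list_row_letter[OF w] partial_sum_mono[of j n] by simp
  then show ?thesis
    using c ij word_tableau_cell card_block[of j "row_density rho i" w "row_letter i"]
      finite_subset[OF block_subset_positions]
    by (simp add: row_density_def)
qed

lemma word_tableau_disjoint:
  assumes c: "c \<in> cells [n, n]" and d: "d \<in> cells [n, n]" and "c \<noteq> d"
  shows "word_tableau n rho w c \<inter> word_tableau n rho w d = {}"
proof -
  obtain i j i' j' where cd: "c = (i, j)" "d = (i', j')" by fastforce
  show ?thesis
  proof (cases "i = i'")
    case True
    then show ?thesis using c d cd \<open>c \<noteq> d\<close> word_tableau_cell block_disjoint by simp
  next
    case False
    then have "row_letter i \<noteq> row_letter i'"
      using c d cd by (auto simp: cells_two_rows row_letter_def)
    then have "positions w (row_letter i) \<inter> positions w (row_letter i') = {}"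
      by (auto simp: positions_def)
    then show ?thesis
      using c d cd word_tableau_cell
        block_subset_positions[of w "row_letter i" "row_density rho i" j]
        block_subset_positions[of w "row_letter i'" "row_density rho i'" j'] by auto
  qed
qed

lemma UN_word_tableau:
  assumes w: "w \<in> paths (partial_sum (row_density rho 1) n) (partial_sum (row_density rho 2) n)"
  shows "(\<Union>c\<in>cells [n, n]. word_tableau n rho w c) = {1..density_total [n, n] rho}"
proof -
  have "(\<Union>c\<in>cells [n, n]. word_tableau n rho w c) =
      positions w (row_letter 1) \<union> positions w (row_letter 2)"
    using positions_eq_UN_word_tableau[OF w, of 1] positions_eq_UN_word_tableau[OF w, of 2]
    unfolding cells_two_rows by auto
  also have "\<dots> = {1..density_total [n, n] rho}"
    using positions_E_Un_N[of w] w by (simp add: row_letter_def paths_def density_total_two_rows)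
  finally show ?thesis .
qed

lemma word_tableau_in_SVT:
  assumes w: "w \<in> paths (partial_sum (row_density rho 1) n) (partial_sum (row_density rho 2) n)"
    and columns: "\<And>j x y. j \<in> {1..n} \<Longrightarrow> x \<in> block w E (row_density rho 1) j \<Longrightarrow>
      y \<in> block w N (row_density rho 2) j \<Longrightarrow> x < y"
  shows "word_tableau n rho w \<in> SVT [n, n] rho"
proof -
  let ?T = "word_tableau n rho w"
  have "\<forall>c. c \<notin> cells [n, n] \<longrightarrow> ?T c = {}"
    by (auto simp: word_tableau_def)
  moreover have "\<forall>c\<in>cells [n, n]. finite (?T c) \<and> card (?T c) = rho c"
    using card_word_tableau[OF w] by blast
  moreover have "\<forall>c\<in>cells [n, n]. \<forall>d\<in>cells [n, n]. c \<noteq> d \<longrightarrow> ?T c \<inter> ?T d = {}"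
    using word_tableau_disjoint by blast
  moreover have "\<forall>i j. (i, j) \<in> cells [n, n] \<longrightarrow>
      ((i, j + 1) \<in> cells [n, n] \<longrightarrow> (\<forall>x\<in>?T (i, j). \<forall>y\<in>?T (i, j + 1). x < y)) \<and>
      ((i + 1, j) \<in> cells [n, n] \<longrightarrow> (\<forall>x\<in>?T (i, j). \<forall>y\<in>?T (i + 1, j). x < y))"
    using block_less[of j "j + 1" for j] columns
    by (auto simp: word_tableau_cell cells_two_rows row_letter_def numeral_2_eq_2)
  ultimately show ?thesis
    using UN_word_tableau[OF w] unfolding SVT_def by (intro CollectI conjI) assumption+
qed

text \<open>Positivity of the density is essential: an empty cell would cut the chain of row
  inequalities, and the tableau would no longer be determined by its word.\<close>

locale two_row_svt =
  fixes n :: nat and rho :: "nat \<times> nat \<Rightarrow> nat" and T :: "nat \<times> nat \<Rightarrow> nat set"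
  assumes svt: "T \<in> SVT [n, n] rho"
    and density_pos: "\<And>c. c \<in> cells [n, n] \<Longrightarrow> 0 < rho c"
begin

abbreviation word :: "step list" where
  "word \<equiv> psi (density_total [n, n] rho) T"

lemma T_outside: "c \<notin> cells [n, n] \<Longrightarrow> T c = {}"
  using svt by (cases c) (simp add: SVT_def)

lemma finite_card_T: "c \<in> cells [n, n] \<Longrightarrow> finite (T c) \<and> card (T c) = rho c"
  using svt by (simp add: SVT_def)

lemma T_disjoint:
  "c \<in> cells [n, n] \<Longrightarrow> d \<in> cells [n, n] \<Longrightarrow> c \<noteq> d \<Longrightarrow> T c \<inter> T d = {}"
  using svt by (simp add: SVT_def)

lemma UN_T: "(\<Union>c\<in>cells [n, n]. T c) = {1..density_total [n, n] rho}"
  using svt by (simp add: SVT_def)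

lemma T_row_increasing:
  "(i, j) \<in> cells [n, n] \<Longrightarrow> (i, Suc j) \<in> cells [n, n] \<Longrightarrow>
    x \<in> T (i, j) \<Longrightarrow> y \<in> T (i, Suc j) \<Longrightarrow> x < y"
  using svt by (auto simp: SVT_def)

lemma T_column_increasing:
  "(i, j) \<in> cells [n, n] \<Longrightarrow> (Suc i, j) \<in> cells [n, n] \<Longrightarrow>
    x \<in> T (i, j) \<Longrightarrow> y \<in> T (Suc i, j) \<Longrightarrow> x < y"
  using svt by (auto simp: SVT_def)

lemma positions_word_E: "positions word E = (\<Union>j\<in>{1..n}. T (1, j))"
proof -
  have "T (1, j) \<subseteq> {1..density_total [n, n] rho}" for j
    using UN_T T_outside[of "(1, j)"] by (cases "(1, j) \<in> cells [n, n]") auto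
  moreover have "T (1, j) = {}" if "j \<notin> {1..n}" for j
    using T_outside that by (simp add: cells_two_rows)
  ultimately show ?thesis unfolding positions_psi_E by blast
qed

lemma positions_word_N: "positions word N = (\<Union>j\<in>{1..n}. T (2, j))"
proof -
  have "positions word N = {1..density_total [n, n] rho} - positions word E"
    using positions_E_Un_N[of word] positions_E_Int_N[of word] by auto
  also have "\<dots> = (\<Union>c\<in>cells [n, n]. T c) - (\<Union>j\<in>{1..n}. T (1, j))"
    by (simp add: UN_T positions_word_E)
  also have "\<dots> = (\<Union>j\<in>{1..n}. T (2, j))"
  proof -
    have "T (1, i) \<inter> T (2, j) = {}" for i j
      using T_disjoint[of "(1, i)" "(2, j)"] T_outside[of "(1, i)"] T_outside[of "(2, j)"]
      by (cases "i \<in> {1..n} \<and> j \<in> {1..n}") (auto simp: cells_two_rows)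
    then show ?thesis unfolding cells_two_rows by blast
  qed
  finally show ?thesis .
qed

lemma positions_word: "i \<in> {1, 2} \<Longrightarrow> positions word (row_letter i) = (\<Union>j\<in>{1..n}. T (i, j))"
  by (auto simp: row_letter_def positions_word_E positions_word_N)

lemma row_increasing_partition:
  assumes "i \<in> {1, 2}"
  shows "increasing_partition n (\<lambda>j. T (i, j)) (row_density rho i)"
proof
  fix j assume "j \<in> {1..n}"
  then have cell: "(i, j) \<in> cells [n, n]" using assms by (auto simp: cells_two_rows)
  show "finite (T (i, j))" "card (T (i, j)) = row_density rho i j"
    using finite_card_T[OF cell] by (simp_all add: row_density_def)
  show "0 < row_density rho i j"
    using density_pos[OF cell] by (simp add: row_density_def)
next
  fix j x y assume "1 \<le> j" "j < n" "x \<in> T (i, j)" "y \<in> T (i, Suc j)"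
  then show "x < y" using T_row_increasing[of i j x y] assms by (auto simp: cells_two_rows)
qed

lemma T_eq_block:
  "(i, j) \<in> cells [n, n] \<Longrightarrow> T (i, j) = block word (row_letter i) (row_density rho i) j"
  using increasing_partition.part_eq_block[OF row_increasing_partition positions_word]
  by (auto simp: cells_two_rows)

lemma T_eq_word_tableau: "T = word_tableau n rho word"
proof
  fix c show "T c = word_tableau n rho word c"
    by (cases c) (simp add: word_tableau_def T_eq_block T_outside)
qed

lemma word_in_paths:
  "word \<in> paths (partial_sum (row_density rho 1) n) (partial_sum (row_density rho 2) n)"
proof -
  have count: "count_list word (row_letter i) = partial_sum (row_density rho i) n"
    if "i \<in> {1, 2}" for i
    using increasing_partition.card_UN_part[OF row_increasing_partition[OF that], of n]
    by (simp add: count_list_eq_card_positions positions_word[OF that])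
  show ?thesis
    using count[of 1] count[of 2] by (simp add: paths_def density_total_two_rows row_letter_def)
qed

lemma word_columns_increasing:
  "j \<in> {1..n} \<Longrightarrow> x \<in> block word E (row_density rho 1) j \<Longrightarrow>
    y \<in> block word N (row_density rho 2) j \<Longrightarrow> x < y"
  using T_eq_block[of 1 j] T_eq_block[of 2 j] T_column_increasing[of 1 j x y]
  by (simp add: cells_two_rows row_letter_def numeral_2_eq_2)

end

section \<open>The maximal path\<close>

lemma count_list_replicate [simp]: "count_list (replicate k x) y = (if x = y then k else 0)"
  by (induction k) auto

lemma path_points_eq_ranks: "path_points w = {(rank w E k, rank w N k) | k. k \<le> length w}"
  by (simp add: path_points_def point_def rank_def)

lemma P_max_0 [simp]: "P_max 0 av bv = []"
  by (simp add: P_max_def)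

lemma P_max_Suc:
  "P_max (Suc m) av bv = P_max m av bv @ replicate (av (Suc m)) E @ replicate (bv (Suc m)) N"
  by (simp add: P_max_def)

lemma count_list_P_max:
  "count_list (P_max m av bv) E = partial_sum av m"
  "count_list (P_max m av bv) N = partial_sum bv m"
  by (induction m) (simp_all add: P_max_Suc)

lemma length_P_max: "length (P_max m av bv) = partial_sum av m + partial_sum bv m"
  by (induction m) (simp_all add: P_max_Suc)

lemma P_max_prefix: "j \<le> m \<Longrightarrow> \<exists>rest. P_max m av bv = P_max j av bv @ rest"
  by (induction m) (auto simp: P_max_Suc le_Suc_eq)

lemma P_max_split:
  "j < m \<Longrightarrow> \<exists>rest. P_max m av bv =
     P_max j av bv @ replicate (av (Suc j)) E @ replicate (bv (Suc j)) N @ rest"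
  using P_max_prefix[of "Suc j" m] by (auto simp: P_max_Suc)

lemma P_max_E_before_N:
  assumes "1 \<le> j" "j \<le> n" "partial_sum bv (j - 1) < count_list (take k (P_max n av bv)) N"
  shows "partial_sum av j \<le> count_list (take k (P_max n av bv)) E"
proof -
  define Q where "Q = P_max (j - 1) av bv @ replicate (av j) E"
  have "Suc (j - 1) = j" "j - 1 < n" using assms(1,2) by auto
  then obtain rest where "P_max n av bv =
      P_max (j - 1) av bv @ replicate (av j) E @ replicate (bv j) N @ rest"
    using P_max_split[of "j - 1" n av bv] by metis
  then have split: "P_max n av bv = Q @ replicate (bv j) N @ rest" by (simp add: Q_def)
  have "count_list Q N = partial_sum bv (j - 1)" "count_list Q E = partial_sum av j"
    using partial_sum_pred[OF assms(1), of av] by (simp_all add: Q_def count_list_P_max)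
  moreover have "length Q < k"
  proof (rule ccontr)
    assume "\<not> length Q < k"
    then have "take k (P_max n av bv) = take k Q" by (simp add: split)
    then show False
      using assms(3) count_list_take_le[of k Q N] \<open>count_list Q N = _\<close> by simp
  qed
  ultimately show ?thesis by (simp add: split)
qed

lemma in_path_points_P_max:
  assumes "j \<le> n" "partial_sum av j \<le> x" "j < n \<longrightarrow> x < partial_sum av (Suc j)"
    and "x \<le> partial_sum av n"
  shows "(x, partial_sum bv j) \<in> path_points (P_max n av bv)"
proof (cases "j < n")
  case True
  then obtain rest where split: "P_max n av bv =
      P_max j av bv @ replicate (av (Suc j)) E @ replicate (bv (Suc j)) N @ rest"
    using P_max_split by blast
  define k where "k = x + partial_sum bv j"
  have "take k (P_max n av bv) = P_max j av bv @ replicate (x - partial_sum av j) E"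
    using split assms True by (simp add: k_def length_P_max)
  moreover have "k \<le> length (P_max n av bv)"
    using assms partial_sum_mono[of j n bv] by (simp add: k_def length_P_max)
  ultimately show ?thesis
    using assms(2) unfolding path_points_def point_def
    by (auto intro!: exI[of _ k] simp: count_list_P_max)
next
  case False
  then show ?thesis
    using assms unfolding path_points_def point_def
    by (auto intro!: exI[of _ "length (P_max n av bv)"] simp: count_list_P_max)
qed

lemma columns_increasing_if_below_P_max:
  assumes ge: "path_ge (P_max n av bv) w" and j: "j \<in> {1..n}"
    and x: "x \<in> block w E av j" and y: "y \<in> block w N bv j"
  shows "x < y"
proof -
  have "y \<in> positions w N" "x \<in> positions w E"
    using x y by (auto simp: block_def)
  then have "(rank w E y, rank w N y) \<in> path_points w"
    by (auto simp: path_points_eq_ranks positions_def)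
  then obtain y' where "rank w N y \<le> y'" "(rank w E y, y') \<in> path_points (P_max n av bv)"
    using ge by (auto simp: path_ge_def)
  then obtain k where "count_list (take k (P_max n av bv)) E = rank w E y"
      "partial_sum bv (j - 1) < count_list (take k (P_max n av bv)) N"
    using y by (auto simp: path_points_def point_def block_def)
  then have "rank w E x \<le> rank w E y"
    using P_max_E_before_N[of j n bv k av] j x by (auto simp: block_def)
  then have "\<not> y < x" using rank_less_position[OF \<open>x \<in> positions w E\<close>] by fastforce
  moreover have "x \<noteq> y"
    using \<open>x \<in> positions w E\<close> \<open>y \<in> positions w N\<close> by (auto simp: positions_def)
  ultimately show ?thesis by simp
qed

lemma below_P_max_if_columns_increasing:
  assumes w: "w \<in> paths (partial_sum av n) (partial_sum bv n)"
    and av_pos: "\<forall>j\<in>{1..n}. 0 < av j" and bv_pos: "\<forall>j\<in>{1..n}. 0 < bv j"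
    and columns: "\<And>j x y. j \<in> {1..n} \<Longrightarrow>
      x \<in> block w E av j \<Longrightarrow> y \<in> block w N bv j \<Longrightarrow> x < y"
  shows "path_ge (P_max n av bv) w"
  unfolding path_ge_def
proof (intro ballI, clarify)
  fix x y assume "(x, y) \<in> path_points w"
  then obtain k where k: "k \<le> length w" "x = rank w E k" "y = rank w N k"
    by (auto simp: path_points_eq_ranks)
  have count: "count_list w E = partial_sum av n" "count_list w N = partial_sum bv n"
    using w by (simp_all add: paths_def)
  have "x \<le> partial_sum av n" using k rank_le_count_list[of w E k] count by simp
  then obtain j where j: "j \<le> n" "partial_sum av j \<le> x" "j < n \<longrightarrow> x < partial_sum av (Suc j)"
    using partial_sum_floor by blast
  have "y \<le> partial_sum bv j"
    \<comment> \<open>otherwise the first entry of cell (2, j + 1) precedes the last entry of cell (1, j + 1)\<close>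
  proof (rule ccontr)
    assume "\<not> y \<le> partial_sum bv j"
    moreover have "y \<le> partial_sum bv n" using k rank_le_count_list[of w N k] count by simp
    ultimately have "j < n" using j(1) by (cases "j = n") auto
    then have Suc_j: "Suc j \<in> {1..n}" by simp
    obtain p where p: "p \<in> positions w N" "p \<le> k" "rank w N p = Suc (partial_sum bv j)"
      using rank_attained[of "Suc (partial_sum bv j)" w N k] \<open>\<not> y \<le> _\<close> k by auto
    moreover have "0 < bv (Suc j)" using bv_pos Suc_j by blast
    ultimately have "p \<in> block w N bv (Suc j)" by (auto simp: block_def)
    have "partial_sum av (Suc j) \<le> rank w E (length w)"
      using partial_sum_mono[of "Suc j" n av] \<open>j < n\<close> count by simp
    then obtain q where q: "q \<in> positions w E" "rank w E q = partial_sum av (Suc j)"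
      using rank_attained[of "partial_sum av (Suc j)" w E "length w"] av_pos Suc_j by fastforce
    then have "q \<in> block w E av (Suc j)" using av_pos Suc_j by (auto simp: block_def)
    then have "q < k"
      using columns[OF Suc_j _ \<open>p \<in> block w N bv (Suc j)\<close>] p(2) by fastforce
    then show False
      using rank_mono[of q k w E] q j \<open>j < n\<close> k by simp
  qed
  then show "\<exists>y'. y \<le> y' \<and> (x, y') \<in> path_points (P_max n av bv)"
    using in_path_points_P_max[OF j \<open>x \<le> _\<close>] by blast
qed

lemma two_row_svt_two_row_density:
  assumes "\<forall>j\<in>{1..n}. 0 < av j" "\<forall>j\<in>{1..n}. 0 < bv j"
    and "T \<in> SVT [n, n] (two_row_density av bv)"
  shows "two_row_svt n (two_row_density av bv) T"
  using assms by unfold_locales (auto simp: cells_two_rows two_row_density_def)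

lemma psi_SVT_below_P_max:
  assumes "\<forall>j\<in>{1..n}. 0 < av j" "\<forall>j\<in>{1..n}. 0 < bv j"
    and "T \<in> SVT [n, n] (two_row_density av bv)"
  defines "w \<equiv> psi (density_total [n, n] (two_row_density av bv)) T"
  shows "w \<in> paths (partial_sum av n) (partial_sum bv n) \<and> path_ge (P_max n av bv) w"
proof -
  interpret two_row_svt n "two_row_density av bv" T
    using two_row_svt_two_row_density[OF assms(1-3)] .
  note rows = row_density_two_row_density[of av bv]
  have "w \<in> paths (partial_sum av n) (partial_sum bv n)"
    using word_in_paths unfolding rows w_def .
  moreover have "path_ge (P_max n av bv) w"
    using below_P_max_if_columns_increasing[OF calculation assms(1,2)]
      word_columns_increasing unfolding rows w_def by blast
  ultimately show ?thesis ..
qed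

lemma word_tableau_below_P_max:
  assumes "w \<in> paths (partial_sum av n) (partial_sum bv n)" and "path_ge (P_max n av bv) w"
  shows "word_tableau n (two_row_density av bv) w \<in> SVT [n, n] (two_row_density av bv)
    \<and> psi (length w) (word_tableau n (two_row_density av bv) w) = w"
  using assms word_tableau_in_SVT[of w "two_row_density av bv" n]
    psi_word_tableau[of w "two_row_density av bv" n] columns_increasing_if_below_P_max
  unfolding row_density_two_row_density by blast

theorem theorem9:
  fixes n :: nat and av bv :: "nat \<Rightarrow> nat"
  assumes "n \<ge> 1"
    and "\<forall>j\<in>{1..n}. av j > 0"
    and "\<forall>j\<in>{1..n}. bv j > 0"
  defines "a \<equiv> (\<Sum>j=1..n. av j)" and "b \<equiv> (\<Sum>j=1..n. bv j)"
  defines "I \<equiv> {P\<in>paths a b. path_ge (P_max n av bv) P}"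
  shows "inj_on (psi (a + b)) (SVT [n, n] (two_row_density av bv))
       \<and> psi (a + b) ` SVT [n, n] (two_row_density av bv) = I
       \<and> bij_betw (psi (a + b)) (SVT [n, n] (two_row_density av bv)) I"
proof -
  let ?rho = "two_row_density av bv"
  have sums: "a = partial_sum av n" "b = partial_sum bv n"
    by (simp_all add: a_def b_def partial_sum_def)
  have total: "density_total [n, n] ?rho = a + b"
    unfolding density_total_two_rows row_density_two_row_density sums ..
  have inj: "inj_on (psi (a + b)) (SVT [n, n] ?rho)"
    by (rule inj_onI)
      (metis assms(2,3) two_row_svt_two_row_density two_row_svt.T_eq_word_tableau total)
  have "psi (a + b) ` SVT [n, n] ?rho \<subseteq> I"
    using psi_SVT_below_P_max[OF assms(2,3)] by (auto simp: I_def total sums)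
  moreover have "I \<subseteq> psi (a + b) ` SVT [n, n] ?rho"
  proof
    fix P assume "P \<in> I"
    then have "word_tableau n ?rho P \<in> SVT [n, n] ?rho \<and> psi (a + b) (word_tableau n ?rho P) = P"
      using word_tableau_below_P_max[of P av n bv] by (auto simp: I_def sums paths_def)
    then show "P \<in> psi (a + b) ` SVT [n, n] ?rho" by (metis image_eqI)
  qed
  ultimately have "psi (a + b) ` SVT [n, n] ?rho = I" by blast
  with inj show ?thesis by (simp add: bij_betw_def)
qed

end
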